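(* Consider the model in the context with $\gamma<0$, and let $s,t\in\mathcal{T}$ with $t\geq s+2$ and $t+1\le T$. Under Assumption A, for both $\tau=s$ and $\tau=t$: \[ P(y_{\tau}=1\mid w^{T},y_{s-1}=y_{t-1},y_{s+1}=y_{t+1}=1,\alpha)=F_{\epsilon|\alpha}(w_{\tau}+\gamma y_{\tau-1}+\alpha)\,P(E_{\tau+1,1}\mid w^{T},y_{s-1}=y_{t-1},y_{s+1}=y_{t+1}=1,\alpha), \] and \[ P(y_{\tau}=1\mid w^{T},y_{s-1}=y_{t-1},y_{s+1}=y_{t+1}=0,\alpha)=P(E_{\tau+1,2}\mid w^{T},y_{s-1}=y_{t-1},y_{s+1}=y_{t+1}=0,\alpha)+F_{\epsilon|\alpha}(w_{\tau}+\gamma y_{\tau-1}+\alpha)\,P(E_{\tau+1,3}\mid w^{T},y_{s-1}=y_{t-1},y_{s+1}=y_{t+1}=0,\alpha), \] where on the right-hand sides $y_{\tau-1}$ denotes its (common) conditioned value.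
   Context: Model: $y_0\in\{0,1\}$ observed and, for $t\in\mathcal{T}=\{1,\dots,T\}$, $y_{t}=1[x_{t}^{\prime}\beta+\gamma y_{t-1}+\alpha-\epsilon_{t}>0]$, $x_t\in\mathbb{R}^K$ observed, $\alpha$ an unobserved individual effect, $\epsilon_t$ unobserved errors. $w_t=x_t'\beta$, $w^T=(w_1,\dots,w_T)$. For each $t$, define the partition $E_{t,1}=\{\epsilon_t<w_t+\gamma+\alpha\}$, $E_{t,2}=\{w_t+\gamma+\alpha\le\epsilon_t<w_t+\alpha\}$, $E_{t,3}=\{\epsilon_t\ge w_t+\alpha\}$. Assumption A: for all $\alpha$ and $s,t\in\mathcal{T}$: (a)(i) $\epsilon^T\perp(x^T,y_0)\mid\alpha$, (ii) $\epsilon_s\perp\epsilon_t\mid\alpha$ ($s\ne t$), (iii) $\epsilon_s\overset{d}{=}\epsilon_t\mid\alpha$, with common CDF $F_{\epsilon|\alpha}$; (b) $F_{\epsilon|\alpha}$ absolutely continuous with support $\mathbb{R}$; (c) $x_{ts,1}$ (first component of $x_t-x_s$) has a.e. positive density on $\mathbb{R}$ given the remaining components and $\alpha$, and $\beta_1\ne0$; (d) the support of $x_t-x_s$ given $\alpha$ is not in a proper linear subspace of $\mathbb{R}^K$; (e) $\|\beta\|_2=1$, $\gamma$ in the interior of a compact $\mathcal{R}\subset\mathbb{R}$. *)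

theory Defs
  imports "HOL-Probability.Probability"
begin

text \<open>Outcome path of the dynamic binary choice model
  y_t = 1[w_t + gamma * y_(t-1) + alpha - eps_t > 0], started at the initial value y0,
  for a given index sequence w (w_t = x_t' beta), state dependence gamma, individual
  effect alpha and error realisations e.\<close>
fun yseq :: "(nat \<Rightarrow> real) \<Rightarrow> real \<Rightarrow> real \<Rightarrow> real \<Rightarrow> (nat \<Rightarrow> real) \<Rightarrow> nat \<Rightarrow> real" where
  "yseq w \<gamma> \<alpha> y0 e 0 = y0"
| "yseq w \<gamma> \<alpha> y0 e (Suc n) =
     (if w (Suc n) + \<gamma> * yseq w \<gamma> \<alpha> y0 e n + \<alpha> - e (Suc n) > 0 then 1 else 0)"

end

theory Submission
  imports Defs
begin

(* The conditioning event is R \<inter> {y_(\<tau>+1) = v}, where R forces y_(\<tau>-1) = d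
   and is generated by y_0 and the errors other than \<epsilon>_\<tau>: for \<tau> = s, the path after period s + 1
   is a path restarted from the conditioned value y_(s+1) = v. On R, y_\<tau> = 1 iff
   \<epsilon>_\<tau> < w_\<tau> + \<gamma> d + \<alpha>, and then y_(\<tau>+1) = 1 iff \<epsilon>_(\<tau>+1) lies below w_(\<tau>+1) + \<gamma> + \<alpha> or
   w_(\<tau>+1) + \<alpha> according as y_\<tau> = 1 or 0; as \<gamma> < 0 the first threshold is the lower one.
   Splitting {y_\<tau> = 1} \<inter> Q along these thresholds, every piece on which \<epsilon>_\<tau> still matters is
   {\<epsilon>_\<tau> < w_\<tau> + \<gamma> d + \<alpha>} intersected with an event independent of \<epsilon>_\<tau>, so it factors, and
   F(x) = P(\<epsilon>_\<tau> < x) because the error distribution has no atoms. *)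

lemma yseq_add:
  "yseq w \<gamma> \<alpha> y0 e (m + k) = yseq (\<lambda>i. w (m + i)) \<gamma> \<alpha> (yseq w \<gamma> \<alpha> y0 e m) (\<lambda>i. e (m + i)) k"
  by (induction k) auto

lemma yseq_eq_if:
  "0 < n \<Longrightarrow> yseq w \<gamma> \<alpha> y0 e n = (if e n < w n + \<gamma> * yseq w \<gamma> \<alpha> y0 e (n - 1) + \<alpha> then 1 else 0)"
  by (cases n) auto

lemma yseq_measurable:
  assumes "y0 \<in> borel_measurable N" and "\<And>k. 1 \<le> k \<Longrightarrow> k \<le> n \<Longrightarrow> e k \<in> borel_measurable N"
  shows "(\<lambda>\<omega>. yseq w \<gamma> \<alpha> (y0 \<omega>) (\<lambda>i. e i \<omega>) n) \<in> borel_measurable N"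
  using assms(2)
proof (induction n)
  case (Suc n)
  then have "(\<lambda>\<omega>. yseq w \<gamma> \<alpha> (y0 \<omega>) (\<lambda>i. e i \<omega>) n) \<in> borel_measurable N"
    and "e (Suc n) \<in> borel_measurable N" by auto
  then show ?case by simp measurable
qed (simp add: assms(1))

definition sigma_of_vars :: "'a measure \<Rightarrow> ('i \<Rightarrow> 'a \<Rightarrow> 'b::topological_space) \<Rightarrow> 'i set \<Rightarrow> 'a measure" where
  "sigma_of_vars M X K = sigma (space M) (\<Union>i\<in>K. {X i -` A \<inter> space M | A. A \<in> sets borel})"

lemma space_sigma_of_vars [simp]: "space (sigma_of_vars M X K) = space M"
  by (auto simp: sigma_of_vars_def space_measure_of_conv)

lemma sets_sigma_of_vars:
  "sets (sigma_of_vars M X K) = sigma_sets (space M) (\<Union>i\<in>K. {X i -` A \<inter> space M | A. A \<in> sets borel})"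
  unfolding sigma_of_vars_def by (rule sets_measure_of) auto

lemma measurable_sigma_of_vars: "i \<in> K \<Longrightarrow> X i \<in> borel_measurable (sigma_of_vars M X K)"
  by (rule measurableI) (auto simp: sets_sigma_of_vars intro!: sigma_sets.Basic)

lemma sets_sigma_of_vars_subset:
  assumes "\<And>i. i \<in> K \<Longrightarrow> X i \<in> borel_measurable M"
  shows "sets (sigma_of_vars M X K) \<subseteq> sets M"
  unfolding sets_sigma_of_vars
  by (rule sets.sigma_sets_subset) (use assms in \<open>auto intro!: measurable_sets\<close>)

lemma (in prob_space) indep_vars_prob_Int_sigma_of_vars:
  assumes indep: "indep_vars (\<lambda>_. borel) X I" and "i \<in> I" and S: "S \<in> sets borel"
    and R: "R \<in> sets (sigma_of_vars M X (I - {i}))"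
  shows "prob (X i -` S \<inter> space M \<inter> R) = prob (X i -` S \<inter> space M) * prob R"
proof -
  let ?G = "\<lambda>i. {X i -` A \<inter> space M | A. A \<in> sets borel}"
  let ?K = "case_bool {i} (I - {i})"
  have "indep_sets (\<lambda>b. sigma_sets (space M) (\<Union>j\<in>?K b. ?G j)) UNIV"
  proof (rule indep_sets_collect_sigma)
    show "indep_sets ?G (\<Union>b. ?K b)"
      using indep \<open>i \<in> I\<close> by (simp add: indep_vars_def2 UNIV_bool insert_absorb)
    show "Int_stable (?G j)" for j
    proof (rule Int_stableI)
      fix a b assume "a \<in> ?G j" "b \<in> ?G j"
      then obtain A B where "A \<in> sets borel" "B \<in> sets borel"
        and "a = X j -` A \<inter> space M" "b = X j -` B \<inter> space M" by blast
      then show "a \<inter> b \<in> ?G j" by (auto intro!: exI[of _ "A \<inter> B"])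
    qed
    show "disjoint_family (?K)"
      by (auto simp: disjoint_family_on_def split: bool.split)
  qed
  also have "(\<lambda>b. sigma_sets (space M) (\<Union>j\<in>?K b. ?G j))
      = case_bool (sigma_sets (space M) (?G i)) (sigma_sets (space M) (\<Union>j\<in>I - {i}. ?G j))"
    by (rule ext) (simp split: bool.split)
  finally have "indep_set (sigma_sets (space M) (?G i)) (sigma_sets (space M) (\<Union>j\<in>I - {i}. ?G j))"
    unfolding indep_set_def .
  then show ?thesis
    using R S by (auto simp: sets_sigma_of_vars intro!: indep_setD)
qed

lemma (in prob_space) prob_less_eq_prob_le_absolutely_continuous:
  fixes X :: "'a \<Rightarrow> real"
  assumes X: "random_variable borel X" and ac: "absolutely_continuous lborel (distr M borel X)"
  shows "prob {\<omega> \<in> space M. X \<omega> < x} = prob {\<omega> \<in> space M. X \<omega> \<le> x}"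
proof -
  have "X -` {x} \<inter> space M \<in> null_sets M"
    using absolutely_continuousD[OF ac, of "{x}"] X by (auto simp: emeasure_distr null_sets_def)
  moreover have "{\<omega> \<in> space M. X \<omega> \<le> x} = {\<omega> \<in> space M. X \<omega> < x} \<union> (X -` {x} \<inter> space M)"
    by auto
  ultimately show ?thesis
    using X by (simp add: measure_Un_null_set)
qed

locale binary_choice_panel = prob_space M for M :: "'a measure" +
  fixes T :: nat and w :: "nat \<Rightarrow> real" and \<gamma> \<alpha> :: real
    and y0 :: "'a \<Rightarrow> real" and eps :: "nat \<Rightarrow> 'a \<Rightarrow> real"
  assumes indep_shocks: "indep_vars (\<lambda>_. borel) (\<lambda>i. if i = 0 then y0 else eps i) {0..T}"
begin

abbreviation shock :: "nat \<Rightarrow> 'a \<Rightarrow> real" where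
  "shock \<equiv> \<lambda>i. if i = 0 then y0 else eps i"

abbreviation outcome :: "nat \<Rightarrow> 'a \<Rightarrow> real" where
  "outcome n \<omega> \<equiv> yseq w \<gamma> \<alpha> (y0 \<omega>) (\<lambda>i. eps i \<omega>) n"

abbreviation sigma_without :: "nat \<Rightarrow> 'a measure" where
  "sigma_without \<tau> \<equiv> sigma_of_vars M shock ({0..T} - {\<tau>})"

abbreviation events_without :: "nat \<Rightarrow> 'a set set" where
  "events_without \<tau> \<equiv> sets (sigma_without \<tau>)"

definition conditioning_event_at :: "nat \<Rightarrow> real \<Rightarrow> real \<Rightarrow> ('a \<Rightarrow> bool) \<Rightarrow> bool" where
  "conditioning_event_at \<tau> d v Q \<longleftrightarrow> (\<exists>R \<in> events_without \<tau>.
     (\<forall>\<omega>\<in>R. outcome (\<tau> - 1) \<omega> = d) \<and> (\<forall>\<omega>\<in>space M. Q \<omega> \<longleftrightarrow> \<omega> \<in> R \<and> outcome (\<tau> + 1) \<omega> = v))"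

lemma shock_measurable: "i \<in> {0..T} \<Longrightarrow> random_variable borel (shock i)"
  using indep_shocks unfolding indep_vars_def2 by blast

lemma eps_measurable: "k \<in> {1..T} \<Longrightarrow> random_variable borel (eps k)"
  using shock_measurable[of k] by simp

lemma events_without_subset: "events_without \<tau> \<subseteq> events"
  using indep_shocks unfolding indep_vars_def2 by (intro sets_sigma_of_vars_subset) auto

lemma events_withoutI:
  "Measurable.pred (sigma_without \<tau>) P \<Longrightarrow> {\<omega> \<in> space M. P \<omega>} \<in> events_without \<tau>"
  by (drule predE) simp

lemma eps_measurable_without:
  assumes "k \<in> {1..T}" "k \<noteq> \<tau>"
  shows "eps k \<in> borel_measurable (sigma_without \<tau>)"
proof -
  have "shock k \<in> borel_measurable (sigma_without \<tau>)"
    using assms by (intro measurable_sigma_of_vars) auto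
  then show ?thesis
    using assms(1) by simp
qed

lemma eps_events_without:
  assumes "k \<in> {1..T}" "k \<noteq> \<tau>" "S \<in> sets borel"
  shows "{\<omega> \<in> space M. eps k \<omega> \<in> S} \<in> events_without \<tau>"
  by (intro events_withoutI pred_sets2[OF assms(3)] eps_measurable_without assms(1,2))

lemma outcome_measurable_without:
  assumes "n < \<tau>" "\<tau> \<le> T"
  shows "outcome n \<in> borel_measurable (sigma_without \<tau>)"
proof (rule yseq_measurable)
  show "y0 \<in> borel_measurable (sigma_without \<tau>)"
    using measurable_sigma_of_vars[of 0 "{0..T} - {\<tau>}" shock M] assms by simp
qed (use assms in \<open>auto intro!: eps_measurable_without\<close>)

lemma prob_eps_Int_events_without:
  assumes "\<tau> \<in> {1..T}" "R \<in> events_without \<tau>"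
  shows "prob ({\<omega> \<in> space M. eps \<tau> \<omega> < c} \<inter> R) = prob {\<omega> \<in> space M. eps \<tau> \<omega> < c} * prob R"
proof -
  have "{\<omega> \<in> space M. eps \<tau> \<omega> < c} = shock \<tau> -` {..<c} \<inter> space M"
    using assms(1) by auto
  then show ?thesis
    using indep_vars_prob_Int_sigma_of_vars[OF indep_shocks _ _ assms(2)] assms(1) by simp
qed

lemma conditioning_event_atE:
  assumes "1 \<le> \<tau>" "conditioning_event_at \<tau> d v Q"
  obtains R where "R \<in> events_without \<tau>" "R \<subseteq> space M"
    "\<forall>\<omega>\<in>R. outcome \<tau> \<omega> = (if eps \<tau> \<omega> < w \<tau> + \<gamma> * d + \<alpha> then 1 else 0)"
    "\<forall>\<omega>\<in>space M. Q \<omega> \<longleftrightarrow> \<omega> \<in> R \<and> outcome (\<tau> + 1) \<omega> = v"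
proof -
  obtain R where R: "R \<in> events_without \<tau>" and past: "\<forall>\<omega>\<in>R. outcome (\<tau> - 1) \<omega> = d"
    and Q: "\<forall>\<omega>\<in>space M. Q \<omega> \<longleftrightarrow> \<omega> \<in> R \<and> outcome (\<tau> + 1) \<omega> = v"
    using assms(2) unfolding conditioning_event_at_def by blast
  show thesis
  proof (rule that)
    show "R \<subseteq> space M"
      using R events_without_subset sets.sets_into_space by blast
    show "\<forall>\<omega>\<in>R. outcome \<tau> \<omega> = (if eps \<tau> \<omega> < w \<tau> + \<gamma> * d + \<alpha> then 1 else 0)"
      using past assms(1) by (simp add: yseq_eq_if)
  qed (use R Q in blast)+
qed

lemma cond_prob_outcome_given_next_1:
  assumes "\<gamma> < 0" "1 \<le> \<tau>" "\<tau> < T" "conditioning_event_at \<tau> d 1 Q"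
  shows "\<P>(\<omega> in M. outcome \<tau> \<omega> = 1 \<bar> Q \<omega>)
    = prob {\<omega> \<in> space M. eps \<tau> \<omega> < w \<tau> + \<gamma> * d + \<alpha>}
      * \<P>(\<omega> in M. eps (\<tau> + 1) \<omega> < w (\<tau> + 1) + \<gamma> + \<alpha> \<bar> Q \<omega>)"
proof -
  define c where "c = w \<tau> + \<gamma> * d + \<alpha>"
  define a1 where "a1 = w (\<tau> + 1) + \<gamma> + \<alpha>"
  define a0 where "a0 = w (\<tau> + 1) + \<alpha>"
  obtain R where R: "R \<in> events_without \<tau>" "R \<subseteq> space M"
    and now: "\<And>\<omega>. \<omega> \<in> R \<Longrightarrow> outcome \<tau> \<omega> = (if eps \<tau> \<omega> < c then 1 else 0)"
    and Q: "\<forall>\<omega>\<in>space M. Q \<omega> \<longleftrightarrow> \<omega> \<in> R \<and> outcome (\<tau> + 1) \<omega> = 1"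
    using assms(2,4) unfolding c_def by (rule conditioning_event_atE) blast
  have Q': "Q \<omega> \<longleftrightarrow> \<omega> \<in> R \<and> eps (\<tau> + 1) \<omega> < (if eps \<tau> \<omega> < c then a1 else a0)"
    if "\<omega> \<in> space M" for \<omega>
    using Q that now by (auto simp: a1_def a0_def)
  have "a1 < a0"
    using assms(1) by (simp add: a1_def a0_def)
  then have joint: "{\<omega> \<in> space M. outcome \<tau> \<omega> = 1 \<and> Q \<omega>}
      = {\<omega> \<in> space M. eps \<tau> \<omega> < c} \<inter> {\<omega> \<in> space M. eps (\<tau> + 1) \<omega> < a1 \<and> Q \<omega>}"
    and low_eq: "{\<omega> \<in> space M. eps (\<tau> + 1) \<omega> < a1 \<and> Q \<omega>} = R \<inter> {\<omega> \<in> space M. eps (\<tau> + 1) \<omega> \<in> {..<a1}}"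
    using Q' R(2) by (auto simp: now split: if_splits)
  have "{\<omega> \<in> space M. eps (\<tau> + 1) \<omega> < a1 \<and> Q \<omega>} \<in> events_without \<tau>"
    unfolding low_eq using assms(2,3) by (intro sets.Int R(1) eps_events_without) auto
  then show ?thesis
    unfolding cond_prob_def joint using prob_eps_Int_events_without assms(2,3) by (simp add: c_def a1_def)
qed

lemma cond_prob_outcome_given_next_0:
  assumes "\<gamma> < 0" "1 \<le> \<tau>" "\<tau> < T" "conditioning_event_at \<tau> d 0 Q"
  shows "\<P>(\<omega> in M. outcome \<tau> \<omega> = 1 \<bar> Q \<omega>)
    = \<P>(\<omega> in M. w (\<tau> + 1) + \<gamma> + \<alpha> \<le> eps (\<tau> + 1) \<omega> \<and> eps (\<tau> + 1) \<omega> < w (\<tau> + 1) + \<alpha> \<bar> Q \<omega>)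
      + prob {\<omega> \<in> space M. eps \<tau> \<omega> < w \<tau> + \<gamma> * d + \<alpha>}
      * \<P>(\<omega> in M. eps (\<tau> + 1) \<omega> \<ge> w (\<tau> + 1) + \<alpha> \<bar> Q \<omega>)"
proof -
  define c where "c = w \<tau> + \<gamma> * d + \<alpha>"
  define a1 where "a1 = w (\<tau> + 1) + \<gamma> + \<alpha>"
  define a0 where "a0 = w (\<tau> + 1) + \<alpha>"
  obtain R where R: "R \<in> events_without \<tau>" "R \<subseteq> space M"
    and now: "\<And>\<omega>. \<omega> \<in> R \<Longrightarrow> outcome \<tau> \<omega> = (if eps \<tau> \<omega> < c then 1 else 0)"
    and Q: "\<forall>\<omega>\<in>space M. Q \<omega> \<longleftrightarrow> \<omega> \<in> R \<and> outcome (\<tau> + 1) \<omega> = 0"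
    using assms(2,4) unfolding c_def by (rule conditioning_event_atE) blast
  have Q': "Q \<omega> \<longleftrightarrow> \<omega> \<in> R \<and> \<not> eps (\<tau> + 1) \<omega> < (if eps \<tau> \<omega> < c then a1 else a0)"
    if "\<omega> \<in> space M" for \<omega>
    using Q that now by (auto simp: a1_def a0_def)
  have "a1 < a0"
    using assms(1) by (simp add: a1_def a0_def)
  let ?mid = "{\<omega> \<in> space M. (a1 \<le> eps (\<tau> + 1) \<omega> \<and> eps (\<tau> + 1) \<omega> < a0) \<and> Q \<omega>}"
  let ?high = "{\<omega> \<in> space M. a0 \<le> eps (\<tau> + 1) \<omega> \<and> Q \<omega>}"
  have joint: "{\<omega> \<in> space M. outcome \<tau> \<omega> = 1 \<and> Q \<omega>} = ?mid \<union> ({\<omega> \<in> space M. eps \<tau> \<omega> < c} \<inter> ?high)"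
    and mid_eq: "?mid = R \<inter> {\<omega> \<in> space M. eps (\<tau> + 1) \<omega> \<in> {a1..<a0}} \<inter> {\<omega> \<in> space M. eps \<tau> \<omega> < c}"
    and high_eq: "?high = R \<inter> {\<omega> \<in> space M. eps (\<tau> + 1) \<omega> \<in> {a0..}}"
    using \<open>a1 < a0\<close> Q' R(2) by (auto simp: now split: if_splits)
  have [measurable]: "random_variable borel (eps \<tau>)"
    using eps_measurable assms(2,3) by simp
  then have low: "{\<omega> \<in> space M. eps \<tau> \<omega> < c} \<in> events"
    by measurable
  have "R \<inter> {\<omega> \<in> space M. eps (\<tau> + 1) \<omega> \<in> {a1..<a0}} \<in> events_without \<tau>"
    using assms(2,3) by (intro sets.Int R(1) eps_events_without) auto
  then have "R \<inter> {\<omega> \<in> space M. eps (\<tau> + 1) \<omega> \<in> {a1..<a0}} \<in> events"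
    using events_without_subset by blast
  then have mid: "?mid \<in> events"
    unfolding mid_eq using low by (rule sets.Int)
  have high: "?high \<in> events_without \<tau>"
    unfolding high_eq using assms(2,3) by (intro sets.Int R(1) eps_events_without) auto
  have "prob {\<omega> \<in> space M. outcome \<tau> \<omega> = 1 \<and> Q \<omega>}
      = prob ?mid + prob ({\<omega> \<in> space M. eps \<tau> \<omega> < c} \<inter> ?high)"
    unfolding joint using mid high low events_without_subset by (intro finite_measure_Union sets.Int) auto
  also have "\<dots> = prob ?mid + prob {\<omega> \<in> space M. eps \<tau> \<omega> < c} * prob ?high"
    using prob_eps_Int_events_without high assms(2,3) by simp
  finally show ?thesis
    by (simp add: cond_prob_def c_def a1_def a0_def add_divide_distrib)
qed

lemma conditioning_event_at_first:
  assumes "1 \<le> s" "s + 2 \<le> t" "t < T"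
  shows "conditioning_event_at s d v
    (\<lambda>\<omega>. outcome (s - 1) \<omega> = d \<and> outcome (t - 1) \<omega> = d \<and> outcome (s + 1) \<omega> = v \<and> outcome (t + 1) \<omega> = v)"
proof -
  define later where "later k \<omega> = yseq (\<lambda>i. w (s + 1 + i)) \<gamma> \<alpha> v (\<lambda>i. eps (s + 1 + i) \<omega>) k" for k \<omega>
  define R where "R = {\<omega> \<in> space M. outcome (s - 1) \<omega> = d \<and> later (t - s - 2) \<omega> = d \<and> later (t - s) \<omega> = v}"
  have later_measurable: "later k \<in> borel_measurable (sigma_without s)" if "k \<le> t - s" for k
    unfolding later_def using that assms by (intro yseq_measurable eps_measurable_without) auto
  have [measurable]: "outcome (s - 1) \<in> borel_measurable (sigma_without s)"
    using assms by (intro outcome_measurable_without) auto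
  have [measurable]: "later (t - s - 2) \<in> borel_measurable (sigma_without s)"
    "later (t - s) \<in> borel_measurable (sigma_without s)"
    by (simp_all add: later_measurable)
  have "R \<in> events_without s"
    unfolding R_def by (intro events_withoutI) measurable
  have shift: "outcome (s + 1 + k) \<omega> = later k \<omega>" if "outcome (s + 1) \<omega> = v" for k \<omega>
    unfolding later_def using yseq_add[of w \<gamma> \<alpha> "y0 \<omega>" "\<lambda>i. eps i \<omega>" "s + 1" k] that by simp
  have "s + 1 + (t - s - 2) = t - 1" "s + 1 + (t - s) = t + 1"
    using assms by auto
  then have "outcome (t - 1) \<omega> = later (t - s - 2) \<omega> \<and> outcome (t + 1) \<omega> = later (t - s) \<omega>"
    if "outcome (s + 1) \<omega> = v" for \<omega>
    using shift[OF that, of "t - s - 2"] shift[OF that, of "t - s"] by (simp only:)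
  with \<open>R \<in> events_without s\<close> show ?thesis
    unfolding conditioning_event_at_def by (intro bexI[of _ R]) (auto simp: R_def simp del: yseq.simps)
qed

lemma conditioning_event_at_second:
  assumes "1 \<le> s" "s + 2 \<le> t" "t < T"
  shows "conditioning_event_at t d v
    (\<lambda>\<omega>. outcome (s - 1) \<omega> = d \<and> outcome (t - 1) \<omega> = d \<and> outcome (s + 1) \<omega> = v \<and> outcome (t + 1) \<omega> = v)"
proof -
  define R where "R = {\<omega> \<in> space M. outcome (s - 1) \<omega> = d \<and> outcome (t - 1) \<omega> = d \<and> outcome (s + 1) \<omega> = v}"
  have [measurable]: "outcome (s - 1) \<in> borel_measurable (sigma_without t)"
    "outcome (t - 1) \<in> borel_measurable (sigma_without t)"
    "outcome (s + 1) \<in> borel_measurable (sigma_without t)"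
    using assms by (intro outcome_measurable_without; simp)+
  have "R \<in> events_without t"
    unfolding R_def by (intro events_withoutI) measurable
  then show ?thesis
    unfolding conditioning_event_at_def by (intro bexI[of _ R]) (auto simp: R_def simp del: yseq.simps)
qed

end

theorem lemma1:
  fixes M :: "'a measure"
    and T s t :: nat
    and w :: "nat \<Rightarrow> real" and \<gamma> \<alpha> :: real
    and y0 :: "'a \<Rightarrow> real" and eps :: "nat \<Rightarrow> 'a \<Rightarrow> real"
    and F :: "real \<Rightarrow> real" and d :: real
  assumes "prob_space M"
    and "\<gamma> < 0"
    and "s \<in> {1..T}" and "t \<in> {1..T}" and "t \<ge> s + 2" and "t + 1 \<le> T"
    and "d \<in> {0, 1}"
    and y0_bin: "\<forall>\<omega>\<in>space M. y0 \<omega> \<in> {0, 1}"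
    and indep: "prob_space.indep_vars M (\<lambda>_. borel) (\<lambda>i. if i = 0 then y0 else eps i) {0..T}"
    and cdf: "\<forall>k\<in>{1..T}. \<forall>x. F x = measure M {\<omega> \<in> space M. eps k \<omega> \<le> x}"
    and abs_cont: "\<forall>k\<in>{1..T}. absolutely_continuous lborel (distr M borel (eps k))"
    and supp: "\<forall>a b. a < b \<longrightarrow> F a < F b"
  shows "\<forall>\<tau>\<in>{s, t}.
     (\<P>(\<omega> in M. yseq w \<gamma> \<alpha> (y0 \<omega>) (\<lambda>i. eps i \<omega>) \<tau> = 1 \<bar>
          yseq w \<gamma> \<alpha> (y0 \<omega>) (\<lambda>i. eps i \<omega>) (s - 1) = d \<and>
          yseq w \<gamma> \<alpha> (y0 \<omega>) (\<lambda>i. eps i \<omega>) (t - 1) = d \<and>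
          yseq w \<gamma> \<alpha> (y0 \<omega>) (\<lambda>i. eps i \<omega>) (s + 1) = 1 \<and>
          yseq w \<gamma> \<alpha> (y0 \<omega>) (\<lambda>i. eps i \<omega>) (t + 1) = 1)
      = F (w \<tau> + \<gamma> * d + \<alpha>) *
        \<P>(\<omega> in M. eps (\<tau> + 1) \<omega> < w (\<tau> + 1) + \<gamma> + \<alpha> \<bar>
          yseq w \<gamma> \<alpha> (y0 \<omega>) (\<lambda>i. eps i \<omega>) (s - 1) = d \<and>
          yseq w \<gamma> \<alpha> (y0 \<omega>) (\<lambda>i. eps i \<omega>) (t - 1) = d \<and>
          yseq w \<gamma> \<alpha> (y0 \<omega>) (\<lambda>i. eps i \<omega>) (s + 1) = 1 \<and>
          yseq w \<gamma> \<alpha> (y0 \<omega>) (\<lambda>i. eps i \<omega>) (t + 1) = 1))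
   \<and>
     (\<P>(\<omega> in M. yseq w \<gamma> \<alpha> (y0 \<omega>) (\<lambda>i. eps i \<omega>) \<tau> = 1 \<bar>
          yseq w \<gamma> \<alpha> (y0 \<omega>) (\<lambda>i. eps i \<omega>) (s - 1) = d \<and>
          yseq w \<gamma> \<alpha> (y0 \<omega>) (\<lambda>i. eps i \<omega>) (t - 1) = d \<and>
          yseq w \<gamma> \<alpha> (y0 \<omega>) (\<lambda>i. eps i \<omega>) (s + 1) = 0 \<and>
          yseq w \<gamma> \<alpha> (y0 \<omega>) (\<lambda>i. eps i \<omega>) (t + 1) = 0)
      = \<P>(\<omega> in M. w (\<tau> + 1) + \<gamma> + \<alpha> \<le> eps (\<tau> + 1) \<omega> \<and> eps (\<tau> + 1) \<omega> < w (\<tau> + 1) + \<alpha> \<bar>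
          yseq w \<gamma> \<alpha> (y0 \<omega>) (\<lambda>i. eps i \<omega>) (s - 1) = d \<and>
          yseq w \<gamma> \<alpha> (y0 \<omega>) (\<lambda>i. eps i \<omega>) (t - 1) = d \<and>
          yseq w \<gamma> \<alpha> (y0 \<omega>) (\<lambda>i. eps i \<omega>) (s + 1) = 0 \<and>
          yseq w \<gamma> \<alpha> (y0 \<omega>) (\<lambda>i. eps i \<omega>) (t + 1) = 0)
        + F (w \<tau> + \<gamma> * d + \<alpha>) *
        \<P>(\<omega> in M. eps (\<tau> + 1) \<omega> \<ge> w (\<tau> + 1) + \<alpha> \<bar>
          yseq w \<gamma> \<alpha> (y0 \<omega>) (\<lambda>i. eps i \<omega>) (s - 1) = d \<and>
          yseq w \<gamma> \<alpha> (y0 \<omega>) (\<lambda>i. eps i \<omega>) (t - 1) = d \<and>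
          yseq w \<gamma> \<alpha> (y0 \<omega>) (\<lambda>i. eps i \<omega>) (s + 1) = 0 \<and>
          yseq w \<gamma> \<alpha> (y0 \<omega>) (\<lambda>i. eps i \<omega>) (t + 1) = 0))"
proof -
  interpret binary_choice_panel M T w \<gamma> \<alpha> y0 eps
    using assms(1) indep by (intro binary_choice_panel.intro binary_choice_panel_axioms.intro)
  define C where "C v \<omega> \<longleftrightarrow>
    outcome (s - 1) \<omega> = d \<and> outcome (t - 1) \<omega> = d \<and> outcome (s + 1) \<omega> = v \<and> outcome (t + 1) \<omega> = v"
    for v \<omega>
  have "\<P>(\<omega> in M. outcome \<tau> \<omega> = 1 \<bar> C 1 \<omega>)
      = F (w \<tau> + \<gamma> * d + \<alpha>) * \<P>(\<omega> in M. eps (\<tau> + 1) \<omega> < w (\<tau> + 1) + \<gamma> + \<alpha> \<bar> C 1 \<omega>)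
    \<and> \<P>(\<omega> in M. outcome \<tau> \<omega> = 1 \<bar> C 0 \<omega>)
      = \<P>(\<omega> in M. w (\<tau> + 1) + \<gamma> + \<alpha> \<le> eps (\<tau> + 1) \<omega> \<and> eps (\<tau> + 1) \<omega> < w (\<tau> + 1) + \<alpha> \<bar> C 0 \<omega>)
        + F (w \<tau> + \<gamma> * d + \<alpha>) * \<P>(\<omega> in M. eps (\<tau> + 1) \<omega> \<ge> w (\<tau> + 1) + \<alpha> \<bar> C 0 \<omega>)"
    if "\<tau> \<in> {s, t}" for \<tau>
  proof -
    have \<tau>: "1 \<le> \<tau>" "\<tau> < T"
      using that assms(3-6) by auto
    have F: "F (w \<tau> + \<gamma> * d + \<alpha>) = prob {\<omega> \<in> space M. eps \<tau> \<omega> < w \<tau> + \<gamma> * d + \<alpha>}"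
      using cdf abs_cont \<tau> prob_less_eq_prob_le_absolutely_continuous[OF eps_measurable] by simp
    have "1 \<le> s" "s + 2 \<le> t" "t < T"
      using assms(3-6) by auto
    then have "conditioning_event_at \<tau> d v (C v)" for v
      using that conditioning_event_at_first conditioning_event_at_second unfolding C_def by blast
    then show ?thesis
      unfolding F using cond_prob_outcome_given_next_1 cond_prob_outcome_given_next_0 assms(2) \<tau> by blast
  qed
  then show ?thesis
    unfolding C_def by blast
qed

end
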